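(* Let $M$ be a duplicial module in a pre-additive category. For all $n\ge0$, $$\kappa_n=(1-b_{n+1}d_n)(1-d_{n-1}b_n)=(1-d_{n-1}b_n)(1-b_{n+1}d_n).$$
   Context: Let $\mathcal A$ be a pre-additive category. Let $\Lambda_+$ be the category with objects $[n]$, $n\ge0$, where $\Lambda_+([m],[n])$ is the set of weakly monotone $f:\mathbb Z\to\mathbb Z$ with $f(j+m+1)=f(j)+n+1$ for all $j$ and $f(0)\ge0$. Define $\varepsilon^n_i:[n-1]\to[n]$ ($n\ge1$, $0\le i\le n$) by $\varepsilon^n_i(j)=j$ for $0\le j<i$, $j+1$ for $i\le j\le n-1$, and $\eta^n_i:[n+1]\to[n]$ ($0\le i\le n+1$) by $\eta^n_i(j)=j$ for $0\le j\le i$, $j-1$ for $i<j\le n+1$. A duplicial module is a functor $M:\Lambda_+^{op}\to\mathcal A$; $M_n=M([n])$, $\partial_{n,i}=M(\varepsilon^n_i):M_n\to M_{n-1}$, $s_{n,i}=M(\eta^n_i):M_n\to M_{n+1}$. Convention $M_{-1}=0$, maps into/out of it zero. Define $b_n=\sum_{i=0}^n(-1)^i\partial_{n,i}$ ($b_0=0$), $d_n=\sum_{i=0}^{n+1}(-1)^is_{n,i}$ ($d_{-1}=0$), and the Karoubi operator $\kappa_n=(-1)^n(\partial_{n+1,0}s_{n,n+1}-s_{n-1,n}\partial_{n,0})$ (so $\kappa_0=\partial_{1,0}s_{0,1}$). *)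

theory Defs
  imports Main
begin

text \<open>A (small) pre-additive category: objects of type 'o, morphisms of type 'm
  (every element of 'm is a morphism), with domain, codomain, composition
  (cmp g f = g after f, defined when pcod f = pdom g), identities, and an
  abelian group structure on every hom-set for which composition is bilinear.\<close>

record ('o, 'm) preadd_cat =
  pdom :: "'m \<Rightarrow> 'o"
  pcod :: "'m \<Rightarrow> 'o"
  cmp  :: "'m \<Rightarrow> 'm \<Rightarrow> 'm"
  idm  :: "'o \<Rightarrow> 'm"
  padd :: "'m \<Rightarrow> 'm \<Rightarrow> 'm"
  pzero :: "'o \<Rightarrow> 'o \<Rightarrow> 'm"
  pneg :: "'m \<Rightarrow> 'm"

definition hom :: "('o, 'm, 'x) preadd_cat_scheme \<Rightarrow> 'o \<Rightarrow> 'o \<Rightarrow> 'm set" where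
  "hom A a b = {f. pdom A f = a \<and> pcod A f = b}"

definition preadditive :: "('o, 'm, 'x) preadd_cat_scheme \<Rightarrow> bool" where
  "preadditive A \<longleftrightarrow>
     (\<forall>a. idm A a \<in> hom A a a) \<and>
     (\<forall>a b c f g. f \<in> hom A a b \<longrightarrow> g \<in> hom A b c \<longrightarrow> cmp A g f \<in> hom A a c) \<and>
     (\<forall>a b c d f g h. f \<in> hom A a b \<longrightarrow> g \<in> hom A b c \<longrightarrow> h \<in> hom A c d \<longrightarrow>
          cmp A h (cmp A g f) = cmp A (cmp A h g) f) \<and>
     (\<forall>a b f. f \<in> hom A a b \<longrightarrow> cmp A f (idm A a) = f \<and> cmp A (idm A b) f = f) \<and>
     (\<forall>a b. pzero A a b \<in> hom A a b) \<and>
     (\<forall>a b f g. f \<in> hom A a b \<longrightarrow> g \<in> hom A a b \<longrightarrow> padd A f g \<in> hom A a b) \<and>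
     (\<forall>a b f. f \<in> hom A a b \<longrightarrow> pneg A f \<in> hom A a b) \<and>
     (\<forall>a b f g h. f \<in> hom A a b \<longrightarrow> g \<in> hom A a b \<longrightarrow> h \<in> hom A a b \<longrightarrow>
          padd A (padd A f g) h = padd A f (padd A g h)) \<and>
     (\<forall>a b f g. f \<in> hom A a b \<longrightarrow> g \<in> hom A a b \<longrightarrow> padd A f g = padd A g f) \<and>
     (\<forall>a b f. f \<in> hom A a b \<longrightarrow> padd A f (pzero A a b) = f) \<and>
     (\<forall>a b f. f \<in> hom A a b \<longrightarrow> padd A f (pneg A f) = pzero A a b) \<and>
     (\<forall>a b c f g g'. f \<in> hom A a b \<longrightarrow> g \<in> hom A b c \<longrightarrow> g' \<in> hom A b c \<longrightarrow>
          cmp A (padd A g g') f = padd A (cmp A g f) (cmp A g' f)) \<and>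
     (\<forall>a b c f f' g. f \<in> hom A a b \<longrightarrow> f' \<in> hom A a b \<longrightarrow> g \<in> hom A b c \<longrightarrow>
          cmp A g (padd A f f') = padd A (cmp A g f) (cmp A g f'))"

text \<open>Morphisms of the category Lambda_+ from [m] to [n].\<close>

definition lam_hom :: "nat \<Rightarrow> nat \<Rightarrow> (int \<Rightarrow> int) set" where
  "lam_hom m n = {f. mono f \<and> (\<forall>j. f (j + int m + 1) = f j + int n + 1) \<and> f 0 \<ge> 0}"

text \<open>Coface and codegeneracy maps, extended periodically from their values
  on {0..n-1} resp. {0..n+1} (the extension is forced by the periodicity condition).\<close>

definition eps :: "nat \<Rightarrow> nat \<Rightarrow> int \<Rightarrow> int" where
  "eps n i j = (let q = j div int n; r = j mod int n in
                 (int n + 1) * q + (if r < int i then r else r + 1))"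

definition eta :: "nat \<Rightarrow> nat \<Rightarrow> int \<Rightarrow> int" where
  "eta n i j = (let q = j div (int n + 2); r = j mod (int n + 2) in
                 (int n + 1) * q + (if r \<le> int i then r else r - 1))"

text \<open>A duplicial module: a functor M : Lambda_+^op \<rightarrow> A, given by objects Mo n = M_n and
  Mf m n f = M(f) : M_n \<rightarrow> M_m for f in Lambda_+([m],[n]).\<close>

definition duplicial ::
  "('o, 'm, 'x) preadd_cat_scheme \<Rightarrow> (nat \<Rightarrow> 'o) \<Rightarrow> (nat \<Rightarrow> nat \<Rightarrow> (int \<Rightarrow> int) \<Rightarrow> 'm) \<Rightarrow> bool" where
  "duplicial A Mo Mf \<longleftrightarrow> preadditive A \<and>
     (\<forall>m n f. f \<in> lam_hom m n \<longrightarrow> Mf m n f \<in> hom A (Mo n) (Mo m)) \<and>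
     (\<forall>m. Mf m m id = idm A (Mo m)) \<and>
     (\<forall>m n p f g. f \<in> lam_hom m n \<longrightarrow> g \<in> lam_hom n p \<longrightarrow>
          Mf m p (g \<circ> f) = cmp A (Mf m n f) (Mf n p g))"

definition psub :: "('o, 'm, 'x) preadd_cat_scheme \<Rightarrow> 'm \<Rightarrow> 'm \<Rightarrow> 'm" where
  "psub A f g = padd A f (pneg A g)"

definition psign :: "('o, 'm, 'x) preadd_cat_scheme \<Rightarrow> nat \<Rightarrow> 'm \<Rightarrow> 'm" where
  "psign A i f = (if even i then f else pneg A f)"

definition psum :: "('o, 'm, 'x) preadd_cat_scheme \<Rightarrow> 'o \<Rightarrow> 'o \<Rightarrow> 'm list \<Rightarrow> 'm" where
  "psum A a b fs = foldr (padd A) fs (pzero A a b)"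

definition face where "face Mf n i = Mf (n - 1) n (eps n i)"
definition dgn where "dgn Mf n i = Mf (n + 1) n (eta n i)"

text \<open>b_n for n \<ge> 1 (b_0 = 0 is handled by the convention below).\<close>
definition bmap where
  "bmap A Mo Mf n = psum A (Mo n) (Mo (n - 1)) (map (\<lambda>i. psign A i (face Mf n i)) [0..<Suc n])"

definition dmap where
  "dmap A Mo Mf n = psum A (Mo n) (Mo (Suc n)) (map (\<lambda>i. psign A i (dgn Mf n i)) [0..<Suc (Suc n)])"

text \<open>d_{n-1} b_n : M_n \<rightarrow> M_n, which is 0 for n = 0 (since M_{-1} = 0).\<close>
definition db where
  "db A Mo Mf n = (if n = 0 then pzero A (Mo 0) (Mo 0) else cmp A (dmap A Mo Mf (n - 1)) (bmap A Mo Mf n))"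

definition bd where
  "bd A Mo Mf n = cmp A (bmap A Mo Mf (Suc n)) (dmap A Mo Mf n)"

text \<open>Karoubi operator; the second term vanishes for n = 0 since it factors through M_{-1} = 0.\<close>
definition kappa where
  "kappa A Mo Mf n = psign A n
     (psub A (cmp A (face Mf (Suc n) 0) (dgn Mf n (Suc n)))
             (if n = 0 then pzero A (Mo 0) (Mo 0) else cmp A (dgn Mf (n - 1) n) (face Mf n 0)))"

end

theory Submission
  imports Defs "HOL-Algebra.FiniteProduct"
begin

(* Written out, b_{n+1} d_n is the alternating double sum of the composites face_i s_j and
   d_{n-1} b_n that of the composites s_k face_l. The duplicial identities cancel face_j s_j
   against face_{j+1} s_j, turn face_{n+1} s_{n+1} into the identity, and match every other term
   of the first sum with the negative of a term of the second, except face_0 s_{n+1} and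
   s_n face_0, which together make up -kappa_n. Hence bd + db = 1 - kappa. Moreover b b = 0 and
   d d = 0 by the (co)simplicial identities, so (bd)(db) = (db)(bd) = 0, and therefore
   (1 - bd)(1 - db) = 1 - (bd + db) = kappa, and likewise in the other order. *)

section \<open>The category Lambda_+\<close>

lemma periodic_shift:
  fixes f :: "int \<Rightarrow> int" and P Q q :: int
  assumes per: "\<And>j. f (j + P) = f j + Q"
  shows "f (j + P * q) = f j + Q * q"
proof (induction q rule: int_induct[where k = 0])
  case (step1 i)
  then show ?case using per[of "j + P * i"] by (simp add: algebra_simps)
next
  case (step2 i)
  then show ?case using per[of "j + P * (i - 1)"] by (simp add: algebra_simps)
qed simp

lemma periodic_mod_div:
  fixes f :: "int \<Rightarrow> int" and P Q :: int
  assumes "\<And>j. f (j + P) = f j + Q"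
  shows "f j = f (j mod P) + Q * (j div P)"
  using periodic_shift[of f P Q, OF assms, of "j mod P" "j div P"] by simp

lemma lam_hom_periodic: "f \<in> lam_hom m n \<Longrightarrow> f (j + (int m + 1)) = f j + (int n + 1)"
  unfolding lam_hom_def by (simp add: add.assoc)

lemma lam_hom_eqI:
  assumes f: "f \<in> lam_hom m n" and g: "g \<in> lam_hom m n"
    and eq: "\<And>j. 0 \<le> j \<Longrightarrow> j \<le> int m \<Longrightarrow> f j = g j"
  shows "f = g"
proof
  fix j
  have "0 \<le> j mod (int m + 1)" "j mod (int m + 1) \<le> int m"
    using pos_mod_bound[of "int m + 1" j] by simp_all
  then show "f j = g j"
    using periodic_mod_div[of f "int m + 1" "int n + 1", OF lam_hom_periodic[OF f], of j]
      periodic_mod_div[of g "int m + 1" "int n + 1", OF lam_hom_periodic[OF g], of j] eq by simp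
qed

lemma periodic_monoI:
  fixes f :: "int \<Rightarrow> int" and P Q :: int
  assumes per: "\<And>j. f (j + P) = f j + Q" and "P > 0"
    and step: "\<And>k. 0 \<le> k \<Longrightarrow> k < P \<Longrightarrow> f k \<le> f (k + 1)"
  shows "mono f"
proof (rule monoI)
  have succ: "f k \<le> f (k + 1)" for k
  proof -
    have "f (k + 1) = f (k mod P + 1) + Q * (k div P)"
      using periodic_shift[of f P Q, OF per, of "k mod P + 1" "k div P"]
      by (simp add: algebra_simps)
    then show ?thesis
      using periodic_mod_div[of f P Q, OF per, of k] step[of "k mod P"] \<open>P > 0\<close> by simp
  qed
  show "f x \<le> f y" if "x \<le> y" for x y
    using that
    by (rule int_ge_induct[where P = "\<lambda>y. f x \<le> f y"]) (auto intro: order.trans[OF _ succ])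
qed

lemma lam_hom_comp: "f \<in> lam_hom m n \<Longrightarrow> g \<in> lam_hom n p \<Longrightarrow> g \<circ> f \<in> lam_hom m p"
  unfolding lam_hom_def by (auto simp: mono_def intro: order.trans)

lemma lam_hom_id: "id \<in> lam_hom m m"
  unfolding lam_hom_def by (simp add: mono_def)

text \<open>The values are given on a period together with the first point of the next one, which is
  needed to check monotonicity across periods.\<close>

lemma eps_eq:
  assumes "0 \<le> k" "k \<le> int m + 1"
  shows "eps (Suc m) i k =
    (if k = int m + 1 then int m + 2 + of_bool (i = 0) else if k < int i then k else k + 1)"
proof (cases "k = int m + 1")
  case True
  then have "k div int (Suc m) = 1" "k mod int (Suc m) = 0" by (simp_all add: add.commute)
  then show ?thesis using True by (simp add: eps_def)
qed (use assms in \<open>simp add: eps_def\<close>)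

lemma eta_eq:
  assumes "0 \<le> k" "k \<le> int n + 2"
  shows "eta n i k = (if k = int n + 2 then int n + 1 else if k \<le> int i then k else k - 1)"
proof (cases "k = int n + 2")
  case True
  then have "k div (int n + 2) = 1" "k mod (int n + 2) = 0" by simp_all
  then show ?thesis using True by (simp add: eta_def)
qed (use assms in \<open>simp add: eta_def\<close>)

lemma eps_lam_hom: "eps (Suc m) i \<in> lam_hom m (Suc m)"
proof -
  have per: "eps (Suc m) i (j + (int m + 1)) = eps (Suc m) i j + (int m + 2)" for j
  proof -
    have "j + (int m + 1) = j + int (Suc m)" by simp
    then show ?thesis
      by (simp only: eps_def Let_def mod_add_self2 div_add_self2) (simp add: algebra_simps)
  qed
  have "mono (eps (Suc m) i)"
    by (rule periodic_monoI[of "eps (Suc m) i" "int m + 1" "int m + 2", OF per]) (auto simp: eps_eq)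
  moreover have "eps (Suc m) i 0 \<ge> 0" by (simp add: eps_def)
  ultimately show ?thesis
    unfolding lam_hom_def using per by (simp add: add.assoc)
qed

lemma eta_lam_hom: "eta n i \<in> lam_hom (Suc n) n"
proof -
  have per: "eta n i (j + (int n + 2)) = eta n i j + (int n + 1)" for j
    by (simp only: eta_def Let_def mod_add_self2 div_add_self2) (simp add: algebra_simps)
  have "mono (eta n i)"
    by (rule periodic_monoI[of "eta n i" "int n + 2" "int n + 1", OF per]) (auto simp: eta_eq)
  moreover have "eta n i 0 \<ge> 0" by (simp add: eta_def)
  ultimately show ?thesis
    unfolding lam_hom_def using per by (simp add: algebra_simps)
qed

lemma eta_comp_eps_same: "j \<le> Suc n \<Longrightarrow> eta n j \<circ> eps (Suc n) j = id"
  by (rule lam_hom_eqI[OF lam_hom_comp[OF eps_lam_hom eta_lam_hom] lam_hom_id])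
    (auto simp: eps_eq eta_eq)

lemma eta_comp_eps_Suc: "j \<le> n \<Longrightarrow> eta n j \<circ> eps (Suc n) (Suc j) = id"
  by (rule lam_hom_eqI[OF lam_hom_comp[OF eps_lam_hom eta_lam_hom] lam_hom_id])
    (auto simp: eps_eq eta_eq)

lemma eta_Suc_comp_eps:
  "l \<le> k \<Longrightarrow> k \<le> Suc m \<Longrightarrow> (k, l) \<noteq> (Suc m, 0) \<Longrightarrow>
    eta (Suc m) (Suc k) \<circ> eps (Suc (Suc m)) l = eps (Suc m) l \<circ> eta m k"
  by (rule lam_hom_eqI[OF lam_hom_comp[OF eps_lam_hom eta_lam_hom]
        lam_hom_comp[OF eta_lam_hom eps_lam_hom]])
    (auto simp: eps_eq eta_eq)

lemma eta_comp_eps_Suc_less: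
  "k < l \<Longrightarrow> l \<le> Suc m \<Longrightarrow>
    eta (Suc m) k \<circ> eps (Suc (Suc m)) (Suc l) = eps (Suc m) l \<circ> eta m k"
  by (rule lam_hom_eqI[OF lam_hom_comp[OF eps_lam_hom eta_lam_hom]
        lam_hom_comp[OF eta_lam_hom eps_lam_hom]])
    (auto simp: eps_eq eta_eq)

lemma eta_comp_eta:
  "i \<le> j \<Longrightarrow> j \<le> Suc m \<Longrightarrow> eta m j \<circ> eta (Suc m) i = eta m i \<circ> eta (Suc m) (Suc j)"
  by (rule lam_hom_eqI[OF lam_hom_comp[OF eta_lam_hom eta_lam_hom]
        lam_hom_comp[OF eta_lam_hom eta_lam_hom]])
    (auto simp: eta_eq)

lemma eps_comp_eps:
  "i \<le> j \<Longrightarrow> j \<le> Suc m \<Longrightarrow>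
    eps (Suc (Suc m)) (Suc j) \<circ> eps (Suc m) i = eps (Suc (Suc m)) i \<circ> eps (Suc m) j"
  by (rule lam_hom_eqI[OF lam_hom_comp[OF eps_lam_hom eps_lam_hom]
        lam_hom_comp[OF eps_lam_hom eps_lam_hom]])
    (auto simp: eps_eq)

section \<open>Finite sums in a preadditive category\<close>

lemma group_hom_finprod:
  assumes "group_hom G H \<phi>" "comm_group G" "comm_group H" "f \<in> I \<rightarrow> carrier G"
  shows "\<phi> (finprod G f I) = finprod H (\<phi> \<circ> f) I"
proof -
  interpret G: comm_group G by fact
  interpret H: comm_group H by fact
  interpret group_hom G H \<phi> by fact
  show ?thesis
    using assms(4) by (induction I rule: infinite_finite_induct) (simp_all add: Pi_iff)
qed

locale preadditive_cat =
  fixes A :: "('o, 'm, 'x) preadd_cat_scheme"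
  assumes preadditive: "preadditive A"
begin

abbreviation Hom :: "'o \<Rightarrow> 'o \<Rightarrow> 'm set" where "Hom \<equiv> Defs.hom A"

lemma Hom_pdom_pcod [simp]: "f \<in> Hom (pdom A f) (pcod A f)"
  by (simp add: Defs.hom_def)

lemma idm_hom [simp]: "idm A a \<in> Hom a a"
  using preadditive unfolding preadditive_def by simp

lemma cmp_hom [simp]: "f \<in> Hom a b \<Longrightarrow> g \<in> Hom b c \<Longrightarrow> cmp A g f \<in> Hom a c"
  using preadditive unfolding preadditive_def by simp

lemma cmp_assoc:
  "f \<in> Hom a b \<Longrightarrow> g \<in> Hom b c \<Longrightarrow> h \<in> Hom c d \<Longrightarrow> cmp A h (cmp A g f) = cmp A (cmp A h g) f"
  using preadditive unfolding preadditive_def by simp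

lemma cmp_idm [simp]: "f \<in> Hom a b \<Longrightarrow> cmp A f (idm A a) = f" "f \<in> Hom a b \<Longrightarrow> cmp A (idm A b) f = f"
  using preadditive unfolding preadditive_def by simp_all

lemma pzero_hom [simp]: "pzero A a b \<in> Hom a b"
  using preadditive unfolding preadditive_def by simp

lemma padd_hom [simp]: "f \<in> Hom a b \<Longrightarrow> g \<in> Hom a b \<Longrightarrow> padd A f g \<in> Hom a b"
  using preadditive unfolding preadditive_def by simp

lemma pneg_hom [simp]: "f \<in> Hom a b \<Longrightarrow> pneg A f \<in> Hom a b"
  using preadditive unfolding preadditive_def by simp

lemma padd_commute: "f \<in> Hom a b \<Longrightarrow> g \<in> Hom a b \<Longrightarrow> padd A f g = padd A g f"
  using preadditive unfolding preadditive_def by simp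

lemma cmp_padd_left:
  "f \<in> Hom a b \<Longrightarrow> g \<in> Hom b c \<Longrightarrow> g' \<in> Hom b c \<Longrightarrow>
    cmp A (padd A g g') f = padd A (cmp A g f) (cmp A g' f)"
  using preadditive unfolding preadditive_def by simp

lemma cmp_padd_right:
  "f \<in> Hom a b \<Longrightarrow> f' \<in> Hom a b \<Longrightarrow> g \<in> Hom b c \<Longrightarrow>
    cmp A g (padd A f f') = padd A (cmp A g f) (cmp A g f')"
  using preadditive unfolding preadditive_def by simp

text \<open>A hom-set as an abelian group, in the multiplicative notation of HOL-Algebra, so that
  \<^const>\<open>finprod\<close> provides finite sums of morphisms.\<close>

definition hom_group :: "'o \<Rightarrow> 'o \<Rightarrow> 'm monoid" where
  "hom_group a b = \<lparr>carrier = Hom a b, mult = padd A, one = pzero A a b\<rparr>"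

lemma hom_group_simps [simp]:
  "carrier (hom_group a b) = Hom a b" "mult (hom_group a b) = padd A"
  "one (hom_group a b) = pzero A a b"
  by (simp_all add: hom_group_def)

lemma comm_group_hom_group: "comm_group (hom_group a b)"
proof -
  have ax: "padd A (padd A f g) h = padd A f (padd A g h)" "padd A f g = padd A g f"
      "padd A f (pzero A a b) = f" "padd A f (pneg A f) = pzero A a b"
    if "f \<in> Hom a b" "g \<in> Hom a b" "h \<in> Hom a b" for f g h
    using preadditive that unfolding preadditive_def by simp_all
  show ?thesis
  proof (rule comm_groupI, simp_all)
    show "padd A (pzero A a b) f = f" if "f \<in> Hom a b" for f
      using that ax[of f "pzero A a b" f] by simp
    show "\<exists>g\<in>Hom a b. padd A g f = pzero A a b" if "f \<in> Hom a b" for f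
      using that ax[of f "pneg A f" f] by (intro bexI[of _ "pneg A f"]) simp_all
  qed (use ax in blast)+
qed

lemma inv_hom_group [simp]: "f \<in> Hom a b \<Longrightarrow> inv\<^bsub>hom_group a b\<^esub> f = pneg A f"
proof -
  assume f: "f \<in> Hom a b"
  interpret comm_group "hom_group a b" by (rule comm_group_hom_group)
  have "padd A f (pneg A f) = pzero A a b"
    using preadditive f unfolding preadditive_def by simp
  then show ?thesis using f m_comm[of f "pneg A f"] by (intro inv_equality) simp_all
qed

lemma padd_pzero [simp]:
  assumes "f \<in> Hom a b"
  shows "padd A f (pzero A a b) = f" "padd A (pzero A a b) f = f"
proof -
  interpret comm_group "hom_group a b" by (rule comm_group_hom_group)
  show "padd A f (pzero A a b) = f" "padd A (pzero A a b) f = f"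
    using r_one[of f] l_one[of f] assms by simp_all
qed

lemma pneg_pzero [simp]: "pneg A (pzero A a b) = pzero A a b"
proof -
  interpret comm_group "hom_group a b" by (rule comm_group_hom_group)
  show ?thesis using inv_one by simp
qed

lemma pneg_pneg [simp]: "pneg A (pneg A f) = f"
proof -
  interpret comm_group "hom_group (pdom A f) (pcod A f)" by (rule comm_group_hom_group)
  show ?thesis using inv_inv[of f] by simp
qed

lemma pneg_padd:
  assumes "f \<in> Hom a b" "g \<in> Hom a b"
  shows "pneg A (padd A f g) = padd A (pneg A f) (pneg A g)"
proof -
  interpret comm_group "hom_group a b" by (rule comm_group_hom_group)
  show ?thesis using inv_mult[of f g] assms by simp
qed

lemma cmp_left_group_hom: "g \<in> Hom b c \<Longrightarrow> group_hom (hom_group a b) (hom_group a c) (cmp A g)"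
  unfolding group_hom_def group_hom_axioms_def Group.hom_def
  by (auto simp: comm_group_hom_group comm_group.axioms(2) cmp_padd_right)

lemma cmp_right_group_hom: "f \<in> Hom a b \<Longrightarrow> group_hom (hom_group b c) (hom_group a c) (\<lambda>g. cmp A g f)"
  unfolding group_hom_def group_hom_axioms_def Group.hom_def
  by (auto simp: comm_group_hom_group comm_group.axioms(2) cmp_padd_left)

lemma cmp_pzero [simp]:
  "f \<in> Hom a b \<Longrightarrow> cmp A (pzero A b c) f = pzero A a c"
  "g \<in> Hom b c \<Longrightarrow> cmp A g (pzero A a b) = pzero A a c"
  using group_hom.hom_one[OF cmp_right_group_hom] group_hom.hom_one[OF cmp_left_group_hom]
  by simp_all

lemma cmp_pneg_left: "f \<in> Hom a b \<Longrightarrow> g \<in> Hom b c \<Longrightarrow> cmp A (pneg A g) f = pneg A (cmp A g f)"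
  using group_hom.hom_inv[OF cmp_right_group_hom, of f a b g c] by simp

lemma cmp_pneg_right: "f \<in> Hom a b \<Longrightarrow> g \<in> Hom b c \<Longrightarrow> cmp A g (pneg A f) = pneg A (cmp A g f)"
  using group_hom.hom_inv[OF cmp_left_group_hom, of g b c f a] by simp

lemma psign_hom [simp]: "f \<in> Hom a b \<Longrightarrow> psign A i f \<in> Hom a b"
  by (simp add: psign_def)

lemma psign_Suc: "psign A (Suc i) f = pneg A (psign A i f)"
  by (simp add: psign_def)

lemma cmp_psign:
  assumes "f \<in> Hom a b" "g \<in> Hom b c"
  shows "cmp A (psign A i g) (psign A j f) = psign A (i + j) (cmp A g f)"
  using assms cmp_pneg_left[of f a b g c] cmp_pneg_left[of "pneg A f" a b g c]
    cmp_pneg_right[of f a b g c]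
  by (simp add: psign_def)

lemma cmp_one_minus_one_minus:
  assumes "X \<in> Hom a a" "Y \<in> Hom a a" "cmp A X Y = pzero A a a"
  shows "cmp A (psub A (idm A a) X) (psub A (idm A a) Y) = psub A (idm A a) (padd A X Y)"
proof -
  interpret G: comm_group "hom_group a a" by (rule comm_group_hom_group)
  let ?W = "padd A (idm A a) (pneg A Y)"
  have W: "?W \<in> Hom a a" using assms by simp
  have "cmp A X ?W = X"
    using assms cmp_padd_right[of "idm A a" a a "pneg A Y" X a] cmp_pneg_right[of Y a a X a] by simp
  then have "cmp A (padd A (idm A a) (pneg A X)) ?W = padd A ?W (pneg A X)"
    using assms W cmp_padd_left[of ?W a a "idm A a" a "pneg A X"] cmp_pneg_left[of ?W a a X a]
      cmp_idm(2)[OF W] by simp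
  also have "\<dots> = padd A (idm A a) (pneg A (padd A X Y))"
    using assms G.m_ac by (simp add: pneg_padd)
  finally show ?thesis unfolding psub_def .
qed

lemma psub_psub_cancel:
  assumes "f \<in> Hom a b" "g \<in> Hom a b"
  shows "psub A f (psub A f g) = g"
proof -
  interpret G: comm_group "hom_group a b" by (rule comm_group_hom_group)
  show ?thesis
    using assms G.m_assoc[of f "pneg A f" g, symmetric] G.r_inv[of f]
    by (simp add: psub_def pneg_padd)
qed

definition hsum :: "'o \<Rightarrow> 'o \<Rightarrow> ('i \<Rightarrow> 'm) \<Rightarrow> 'i set \<Rightarrow> 'm" where
  "hsum a b = finprod (hom_group a b)"

lemma hsum_hom [simp]:
  assumes "\<And>i. i \<in> I \<Longrightarrow> h i \<in> Hom a b"
  shows "hsum a b h I \<in> Hom a b"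
proof -
  interpret comm_group "hom_group a b" by (rule comm_group_hom_group)
  show ?thesis using finprod_closed[of h I] assms by (auto simp: hsum_def)
qed

lemma hsum_empty [simp]: "hsum a b h {} = pzero A a b"
proof -
  interpret comm_group "hom_group a b" by (rule comm_group_hom_group)
  show ?thesis by (simp add: hsum_def)
qed

lemma hsum_insert:
  assumes "finite I" "i \<notin> I" "h i \<in> Hom a b" "\<And>j. j \<in> I \<Longrightarrow> h j \<in> Hom a b"
  shows "hsum a b h (insert i I) = padd A (h i) (hsum a b h I)"
proof -
  interpret comm_group "hom_group a b" by (rule comm_group_hom_group)
  show ?thesis using assms by (simp add: hsum_def Pi_iff)
qed

lemma hsum_Un_disjoint:
  assumes "finite I" "finite J" "I \<inter> J = {}" "\<And>i. i \<in> I \<union> J \<Longrightarrow> h i \<in> Hom a b"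
  shows "hsum a b h (I \<union> J) = padd A (hsum a b h I) (hsum a b h J)"
proof -
  interpret comm_group "hom_group a b" by (rule comm_group_hom_group)
  show ?thesis using assms finprod_Un_disjoint[of I J h] by (simp add: hsum_def Pi_iff)
qed

lemma hsum_reindex:
  assumes "inj_on p I" "\<And>i. i \<in> I \<Longrightarrow> h (p i) \<in> Hom a b"
  shows "hsum a b h (p ` I) = hsum a b (\<lambda>i. h (p i)) I"
proof -
  interpret comm_group "hom_group a b" by (rule comm_group_hom_group)
  show ?thesis using assms finprod_reindex[of h p I] by (auto simp: hsum_def Pi_iff)
qed

lemma hsum_padd:
  assumes "\<And>i. i \<in> I \<Longrightarrow> h i \<in> Hom a b" "\<And>i. i \<in> I \<Longrightarrow> h' i \<in> Hom a b"
  shows "hsum a b (\<lambda>i. padd A (h i) (h' i)) I = padd A (hsum a b h I) (hsum a b h' I)"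
proof -
  interpret comm_group "hom_group a b" by (rule comm_group_hom_group)
  show ?thesis using assms finprod_multf[of h I h'] by (simp add: hsum_def Pi_iff)
qed

lemma hsum_cong:
  assumes "\<And>i. i \<in> I \<Longrightarrow> h i = h' i" "\<And>i. i \<in> I \<Longrightarrow> h' i \<in> Hom a b"
  shows "hsum a b h I = hsum a b h' I"
proof -
  interpret comm_group "hom_group a b" by (rule comm_group_hom_group)
  show ?thesis using assms finprod_cong'[of I I h' h] by (simp add: hsum_def Pi_iff)
qed

lemma hsum_eq_pzero:
  assumes "\<And>i. i \<in> I \<Longrightarrow> h i = pzero A a b"
  shows "hsum a b h I = pzero A a b"
proof -
  interpret comm_group "hom_group a b" by (rule comm_group_hom_group)
  show ?thesis using assms by (simp add: hsum_def finprod_one_eqI)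
qed

lemma cmp_hsum_left:
  assumes "g \<in> Hom b c" "\<And>i. i \<in> I \<Longrightarrow> h i \<in> Hom a b"
  shows "cmp A g (hsum a b h I) = hsum a c (\<lambda>i. cmp A g (h i)) I"
proof -
  have "group_hom (hom_group a b) (hom_group a c) (cmp A g)"
    using assms(1) by (rule cmp_left_group_hom)
  from group_hom_finprod[OF this comm_group_hom_group comm_group_hom_group, of h I] assms(2)
  show ?thesis by (simp add: hsum_def comp_def Pi_iff)
qed

lemma cmp_hsum_right:
  assumes "f \<in> Hom a b" "\<And>i. i \<in> I \<Longrightarrow> h i \<in> Hom b c"
  shows "cmp A (hsum b c h I) f = hsum a c (\<lambda>i. cmp A (h i) f) I"
proof -
  have "group_hom (hom_group b c) (hom_group a c) (\<lambda>g. cmp A g f)"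
    using assms(1) by (rule cmp_right_group_hom)
  from group_hom_finprod[OF this comm_group_hom_group comm_group_hom_group, of h I] assms(2)
  show ?thesis by (simp add: hsum_def comp_def Pi_iff)
qed

lemma hsum_Sigma:
  assumes "finite I" "finite J" "\<And>i j. i \<in> I \<Longrightarrow> j \<in> J \<Longrightarrow> h i j \<in> Hom a b"
  shows "hsum a b (\<lambda>i. hsum a b (h i) J) I = hsum a b (\<lambda>(i, j). h i j) (I \<times> J)"
  using assms
proof (induction I rule: finite_induct)
  case (insert i I)
  have "insert i I \<times> J = Pair i ` J \<union> I \<times> J" by auto
  then have "hsum a b (\<lambda>(i, j). h i j) (insert i I \<times> J)
      = padd A (hsum a b (\<lambda>(i, j). h i j) (Pair i ` J)) (hsum a b (\<lambda>(i, j). h i j) (I \<times> J))"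
    using insert by (auto intro: hsum_Un_disjoint)
  also have "hsum a b (\<lambda>(i, j). h i j) (Pair i ` J) = hsum a b (h i) J"
    using insert by (simp add: hsum_reindex inj_on_def)
  finally show ?case
    using insert by (simp add: hsum_insert)
qed simp

lemma cmp_hsum_hsum:
  assumes "finite I" "finite J" "\<And>i. i \<in> I \<Longrightarrow> g i \<in> Hom b c" "\<And>j. j \<in> J \<Longrightarrow> f j \<in> Hom a b"
  shows "cmp A (hsum b c g I) (hsum a b f J) = hsum a c (\<lambda>(i, j). cmp A (g i) (f j)) (I \<times> J)"
proof -
  have "cmp A (hsum b c g I) (hsum a b f J) = hsum a c (\<lambda>i. cmp A (g i) (hsum a b f J)) I"
    using assms by (simp add: cmp_hsum_right)
  also have "\<dots> = hsum a c (\<lambda>i. hsum a c (\<lambda>j. cmp A (g i) (f j)) J) I"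
    using assms by (intro hsum_cong) (simp_all add: cmp_hsum_left cmp_hom[of _ a b _ c])
  also have "\<dots> = hsum a c (\<lambda>(i, j). cmp A (g i) (f j)) (I \<times> J)"
    using assms by (intro hsum_Sigma) (simp_all add: cmp_hom[of _ a b _ c])
  finally show ?thesis .
qed

lemma hsum_pairs_cancel:
  assumes "finite S" "inj_on p S" "inj_on q S" "p ` S \<inter> q ` S = {}"
    and "\<And>s. s \<in> S \<Longrightarrow> h (q s) \<in> Hom a b"
    and "\<And>s. s \<in> S \<Longrightarrow> h (p s) = pneg A (h (q s))"
  shows "hsum a b h (p ` S \<union> q ` S) = pzero A a b"
proof -
  interpret G: comm_group "hom_group a b" by (rule comm_group_hom_group)
  have hp: "h (p s) \<in> Hom a b" if "s \<in> S" for s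
    using assms that by simp
  have "hsum a b h (p ` S \<union> q ` S) = padd A (hsum a b h (p ` S)) (hsum a b h (q ` S))"
    using assms hp by (intro hsum_Un_disjoint) auto
  also have "\<dots> = padd A (hsum a b (\<lambda>s. h (p s)) S) (hsum a b (\<lambda>s. h (q s)) S)"
    using assms hp by (simp add: hsum_reindex)
  also have "\<dots> = hsum a b (\<lambda>s. padd A (h (p s)) (h (q s))) S"
    using assms by (simp add: hsum_padd)
  also have "\<dots> = pzero A a b"
    using assms G.l_inv by (intro hsum_eq_pzero) simp
  finally show ?thesis .
qed

lemma psum_eq_hsum:
  "distinct xs \<Longrightarrow> (\<And>x. x \<in> set xs \<Longrightarrow> f x \<in> Hom a b) \<Longrightarrow> psum A a b (map f xs) = hsum a b f (set xs)"
  by (induction xs) (simp_all add: psum_def hsum_insert)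

definition altsum :: "'o \<Rightarrow> 'o \<Rightarrow> (nat \<Rightarrow> 'm) \<Rightarrow> nat \<Rightarrow> 'm" where
  "altsum a b f n = hsum a b (\<lambda>i. psign A i (f i)) {..n}"

lemma altsum_hom [simp]: "(\<And>i. f i \<in> Hom a b) \<Longrightarrow> altsum a b f n \<in> Hom a b"
  by (simp add: altsum_def)

lemma cmp_altsum:
  assumes "\<And>i. g i \<in> Hom b c" "\<And>j. f j \<in> Hom a b"
  shows "cmp A (altsum b c g N) (altsum a b f M) =
    hsum a c (\<lambda>(i, j). psign A (i + j) (cmp A (g i) (f j))) ({..N} \<times> {..M})"
proof -
  have "cmp A (altsum b c g N) (altsum a b f M) =
      hsum a c (\<lambda>(i, j). cmp A (psign A i (g i)) (psign A j (f j))) ({..N} \<times> {..M})"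
    using assms by (simp add: altsum_def cmp_hsum_hsum)
  also have "\<dots> = hsum a c (\<lambda>(i, j). psign A (i + j) (cmp A (g i) (f j))) ({..N} \<times> {..M})"
    using assms
    by (intro hsum_cong) (auto simp: cmp_psign[OF assms(2) assms(1)] cmp_hom[of _ a b _ c])
  finally show ?thesis .
qed

lemma hsum_alternating_eq_pzero:
  assumes "\<And>i j. h i j \<in> Hom a b" "\<And>i j. i \<le> j \<Longrightarrow> j \<le> n \<Longrightarrow> h (Suc j) i = h i j"
  shows "hsum a b (\<lambda>(i, j). psign A (i + j) (h i j)) ({..Suc n} \<times> {..n}) = pzero A a b"
proof -
  define S where "S = {(i, j). i \<le> j \<and> j \<le> n}"
  define q where "q = (\<lambda>(i, j). (Suc j, i :: nat))"
  have "{..Suc n} \<times> {..n} = (\<lambda>s. s) ` S \<union> q ` S"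
  proof (intro equalityI subsetI)
    fix t assume "t \<in> {..Suc n} \<times> {..n}"
    then obtain i j where t: "t = (i, j)" "i \<le> Suc n" "j \<le> n" by auto
    show "t \<in> (\<lambda>s. s) ` S \<union> q ` S"
    proof (cases "i \<le> j")
      case False
      then have "t = q (j, i - 1)" "(j, i - 1) \<in> S" using t by (auto simp: q_def S_def)
      then show ?thesis by blast
    qed (use t S_def in auto)
  qed (auto simp: S_def q_def)
  also have "hsum a b (\<lambda>(i, j). psign A (i + j) (h i j)) \<dots> = pzero A a b"
  proof (rule hsum_pairs_cancel)
    show "finite S"
      unfolding S_def by (rule finite_subset[of _ "{..n} \<times> {..n}"]) auto
    show "inj_on q S" "(\<lambda>s. s) ` S \<inter> q ` S = {}"
      by (auto simp: S_def q_def inj_on_def)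
  qed (auto simp: S_def q_def assms psign_Suc add.commute)
  finally show ?thesis .
qed

lemma cmp_altsum_eq_pzero_cosimplicial:
  assumes "\<And>i. g i \<in> Hom b c" "\<And>j. f j \<in> Hom a b"
    and "\<And>i j. i \<le> j \<Longrightarrow> j \<le> n \<Longrightarrow> cmp A (g (Suc j)) (f i) = cmp A (g i) (f j)"
  shows "cmp A (altsum b c g (Suc n)) (altsum a b f n) = pzero A a c"
  using assms by (simp add: cmp_altsum hsum_alternating_eq_pzero cmp_hom[of _ a b _ c])

lemma cmp_altsum_eq_pzero_simplicial:
  assumes "\<And>i. g i \<in> Hom b c" "\<And>j. f j \<in> Hom a b"
    and "\<And>i j. i \<le> j \<Longrightarrow> j \<le> n \<Longrightarrow> cmp A (g i) (f (Suc j)) = cmp A (g j) (f i)"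
  shows "cmp A (altsum b c g n) (altsum a b f (Suc n)) = pzero A a c"
proof -
  have "cmp A (altsum b c g n) (altsum a b f (Suc n)) =
      hsum a c (\<lambda>(i, j). psign A (i + j) (cmp A (g i) (f j))) ({..n} \<times> {..Suc n})"
    using assms by (simp add: cmp_altsum)
  also have "{..n} \<times> {..Suc n} = prod.swap ` ({..Suc n} \<times> {..n})" by auto
  also have "hsum a c (\<lambda>(i, j). psign A (i + j) (cmp A (g i) (f j))) \<dots> =
      hsum a c (\<lambda>(j, i). psign A (j + i) (cmp A (g i) (f j))) ({..Suc n} \<times> {..n})"
    using assms by (subst hsum_reindex) (auto simp: add.commute cmp_hom[of _ a b _ c] split_def)
  also have "\<dots> = pzero A a c"
    using assms by (simp add: hsum_alternating_eq_pzero cmp_hom[of _ a b _ c])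
  finally show ?thesis .
qed

end

section \<open>Duplicial modules\<close>

text \<open>The term s_k face_l of d_{n-1} b_n is cancelled by the term face_i s_j of b_{n+1} d_n
  with (i, j) = db_to_bd_index (k, l), except for (k, l) = (n, 0): the pair of terms
  s_n face_0 and face_0 s_{n+1} is what makes up kappa_n.\<close>

definition db_to_bd_index :: "nat \<times> nat \<Rightarrow> nat \<times> nat" where
  "db_to_bd_index = (\<lambda>(k, l). if l \<le> k then (l, Suc k) else (Suc l, k))"

lemma inj_db_to_bd_index: "inj db_to_bd_index"
  by (auto simp: inj_def db_to_bd_index_def split: if_splits)

lemma db_to_bd_index_image:
  "db_to_bd_index ` ({..n} \<times> {..n} - {(n, 0)}) =
    {(i, j). i < j \<and> j \<le> Suc n \<and> (i, j) \<noteq> (0, Suc n)} \<union> {(i, j). Suc j < i \<and> i \<le> Suc n}"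
  (is "_ = ?U \<union> ?L")
proof (intro equalityI subsetI)
  fix t assume "t \<in> ?U \<union> ?L"
  then obtain i j where t: "t = (i, j)" "(i, j) \<in> ?U \<union> ?L" by auto
  show "t \<in> db_to_bd_index ` ({..n} \<times> {..n} - {(n, 0)})"
  proof (cases "i < j")
    case True
    then have "t = db_to_bd_index (j - 1, i)" using t by (simp add: db_to_bd_index_def)
    moreover have "(j - 1, i) \<in> {..n} \<times> {..n} - {(n, 0)}" using t True by auto
    ultimately show ?thesis by blast
  next
    case False
    then have "t = db_to_bd_index (j, i - 1)" using t by (auto simp: db_to_bd_index_def)
    moreover have "(j, i - 1) \<in> {..n} \<times> {..n} - {(n, 0)}" using t False by auto
    ultimately show ?thesis by blast
  qed
qed (auto simp: db_to_bd_index_def split: if_splits)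

locale duplicial_module =
  fixes A :: "('o, 'm, 'x) preadd_cat_scheme"
    and Mo :: "nat \<Rightarrow> 'o" and Mf :: "nat \<Rightarrow> nat \<Rightarrow> (int \<Rightarrow> int) \<Rightarrow> 'm"
  assumes duplicial: "duplicial A Mo Mf"

sublocale duplicial_module \<subseteq> preadditive_cat A
  using duplicial by unfold_locales (simp add: duplicial_def)

context duplicial_module
begin

lemma Mf_hom: "f \<in> lam_hom m n \<Longrightarrow> Mf m n f \<in> Hom (Mo n) (Mo m)"
  using duplicial unfolding duplicial_def by simp

lemma Mf_comp:
  "f \<in> lam_hom m n \<Longrightarrow> g \<in> lam_hom n p \<Longrightarrow> cmp A (Mf m n f) (Mf n p g) = Mf m p (g \<circ> f)"
  using duplicial unfolding duplicial_def by simp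

lemma Mf_id: "Mf m m id = idm A (Mo m)"
  using duplicial unfolding duplicial_def by simp

lemma face_hom [simp]: "face Mf (Suc m) i \<in> Hom (Mo (Suc m)) (Mo m)"
  by (simp add: face_def Mf_hom eps_lam_hom)

lemma dgn_hom [simp]: "dgn Mf n i \<in> Hom (Mo n) (Mo (Suc n))"
  using Mf_hom[OF eta_lam_hom] by (simp add: dgn_def)

lemma face_dgn_same: "j \<le> Suc n \<Longrightarrow> cmp A (face Mf (Suc n) j) (dgn Mf n j) = idm A (Mo n)"
  by (simp add: face_def dgn_def Mf_comp eps_lam_hom eta_lam_hom eta_comp_eps_same Mf_id)

lemma face_Suc_dgn: "j \<le> n \<Longrightarrow> cmp A (face Mf (Suc n) (Suc j)) (dgn Mf n j) = idm A (Mo n)"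
  by (simp add: face_def dgn_def Mf_comp eps_lam_hom eta_lam_hom eta_comp_eps_Suc Mf_id)

lemma face_dgn_Suc:
  "l \<le> k \<Longrightarrow> k \<le> Suc m \<Longrightarrow> (k, l) \<noteq> (Suc m, 0) \<Longrightarrow>
    cmp A (face Mf (Suc (Suc m)) l) (dgn Mf (Suc m) (Suc k)) =
    cmp A (dgn Mf m k) (face Mf (Suc m) l)"
  by (simp add: face_def dgn_def Mf_comp eps_lam_hom eta_lam_hom eta_Suc_comp_eps)

lemma face_Suc_dgn_less:
  "k < l \<Longrightarrow> l \<le> Suc m \<Longrightarrow>
    cmp A (face Mf (Suc (Suc m)) (Suc l)) (dgn Mf (Suc m) k) =
    cmp A (dgn Mf m k) (face Mf (Suc m) l)"
  by (simp add: face_def dgn_def Mf_comp eps_lam_hom eta_lam_hom eta_comp_eps_Suc_less)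

lemma dgn_dgn:
  "i \<le> j \<Longrightarrow> j \<le> Suc m \<Longrightarrow>
    cmp A (dgn Mf (Suc m) (Suc j)) (dgn Mf m i) = cmp A (dgn Mf (Suc m) i) (dgn Mf m j)"
  by (simp add: dgn_def Mf_comp eta_lam_hom eta_comp_eta)

lemma face_face:
  "i \<le> j \<Longrightarrow> j \<le> Suc m \<Longrightarrow>
    cmp A (face Mf (Suc m) i) (face Mf (Suc (Suc m)) (Suc j)) =
    cmp A (face Mf (Suc m) j) (face Mf (Suc (Suc m)) i)"
  by (simp add: face_def Mf_comp eps_lam_hom eps_comp_eps)

lemma bmap_eq_altsum: "bmap A Mo Mf (Suc m) = altsum (Mo (Suc m)) (Mo m) (face Mf (Suc m)) (Suc m)"
  unfolding bmap_def altsum_def diff_Suc_1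
  by (subst psum_eq_hsum)
    (simp_all only: set_upt atLeast0LessThan lessThan_Suc_atMost distinct_upt psign_hom face_hom)

lemma dmap_eq_altsum: "dmap A Mo Mf n = altsum (Mo n) (Mo (Suc n)) (dgn Mf n) (Suc n)"
  unfolding dmap_def altsum_def
  by (subst psum_eq_hsum)
    (simp_all only: set_upt atLeast0LessThan lessThan_Suc_atMost distinct_upt psign_hom dgn_hom)

lemma dmap_comp_dmap:
  "cmp A (dmap A Mo Mf (Suc m)) (dmap A Mo Mf m) = pzero A (Mo m) (Mo (Suc (Suc m)))"
  unfolding dmap_eq_altsum by (rule cmp_altsum_eq_pzero_cosimplicial) (simp_all add: dgn_dgn)

lemma bmap_comp_bmap:
  "cmp A (bmap A Mo Mf (Suc m)) (bmap A Mo Mf (Suc (Suc m))) = pzero A (Mo (Suc (Suc m))) (Mo m)"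
  unfolding bmap_eq_altsum by (rule cmp_altsum_eq_pzero_simplicial) (simp_all add: face_face)

lemma bmap_hom [simp]: "bmap A Mo Mf (Suc m) \<in> Hom (Mo (Suc m)) (Mo m)"
  by (simp add: bmap_eq_altsum)

lemma dmap_hom [simp]: "dmap A Mo Mf n \<in> Hom (Mo n) (Mo (Suc n))"
  by (simp add: dmap_eq_altsum)

lemma bd_hom [simp]: "bd A Mo Mf n \<in> Hom (Mo n) (Mo n)"
  using cmp_hom[OF dmap_hom bmap_hom] by (simp add: bd_def)

lemma db_hom [simp]: "db A Mo Mf n \<in> Hom (Mo n) (Mo n)"
  using cmp_hom[OF bmap_hom dmap_hom] by (cases n) (simp_all add: db_def)

lemma bd_comp_db: "cmp A (bd A Mo Mf n) (db A Mo Mf n) = pzero A (Mo n) (Mo n)"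
proof (cases n)
  case (Suc m)
  have "cmp A (bd A Mo Mf n) (db A Mo Mf n) =
      cmp A (bmap A Mo Mf (Suc n))
        (cmp A (cmp A (dmap A Mo Mf n) (dmap A Mo Mf m)) (bmap A Mo Mf n))"
    unfolding Suc bd_def db_def using cmp_assoc[OF cmp_hom[OF bmap_hom dmap_hom] dmap_hom bmap_hom]
      cmp_assoc[OF bmap_hom dmap_hom dmap_hom] by simp
  then show ?thesis
    using Suc cmp_pzero(1)[OF bmap_hom] by (simp add: dmap_comp_dmap)
qed (simp add: db_def)

lemma db_comp_bd: "cmp A (db A Mo Mf n) (bd A Mo Mf n) = pzero A (Mo n) (Mo n)"
proof (cases n)
  case (Suc m)
  have "cmp A (db A Mo Mf n) (bd A Mo Mf n) =
      cmp A (dmap A Mo Mf m)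
        (cmp A (cmp A (bmap A Mo Mf n) (bmap A Mo Mf (Suc n))) (dmap A Mo Mf n))"
    unfolding Suc bd_def db_def using cmp_assoc[OF cmp_hom[OF dmap_hom bmap_hom] bmap_hom dmap_hom]
      cmp_assoc[OF dmap_hom bmap_hom bmap_hom] by simp
  then show ?thesis
    using Suc cmp_pzero(1)[OF dmap_hom] by (simp add: bmap_comp_bmap)
qed (simp add: db_def)

definition bd_term :: "nat \<Rightarrow> nat \<times> nat \<Rightarrow> 'm" where
  "bd_term n = (\<lambda>(i, j). psign A (i + j) (cmp A (face Mf (Suc n) i) (dgn Mf n j)))"

definition db_term :: "nat \<Rightarrow> nat \<times> nat \<Rightarrow> 'm" where
  "db_term m = (\<lambda>(k, l). psign A (k + l) (cmp A (dgn Mf m k) (face Mf (Suc m) l)))"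

lemma bd_term_hom [simp]: "bd_term n t \<in> Hom (Mo n) (Mo n)"
  using cmp_hom[OF dgn_hom face_hom] by (simp add: bd_term_def split_def)

lemma db_term_hom [simp]: "db_term m t \<in> Hom (Mo (Suc m)) (Mo (Suc m))"
  using cmp_hom[OF face_hom dgn_hom] by (simp add: db_term_def split_def)

lemma bd_eq_hsum: "bd A Mo Mf n = hsum (Mo n) (Mo n) (bd_term n) ({..Suc n} \<times> {..Suc n})"
  by (simp add: bd_def bmap_eq_altsum dmap_eq_altsum cmp_altsum bd_term_def)

lemma db_Suc_eq_hsum:
  "db A Mo Mf (Suc m) = hsum (Mo (Suc m)) (Mo (Suc m)) (db_term m) ({..Suc m} \<times> {..Suc m})"
  by (simp add: db_def bmap_eq_altsum dmap_eq_altsum cmp_altsum db_term_def)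

lemma bd_term_db_to_bd_index:
  assumes "t \<in> {..Suc m} \<times> {..Suc m} - {(Suc m, 0)}"
  shows "bd_term (Suc m) (db_to_bd_index t) = pneg A (db_term m t)"
proof -
  obtain k l where "t = (k, l)" by (cases t)
  with assms have t: "t = (k, l)" "k \<le> Suc m" "l \<le> Suc m" "(k, l) \<noteq> (Suc m, 0)" by auto
  show ?thesis
  proof (cases "l \<le> k")
    case True
    then show ?thesis
      using t
      by (simp add: db_to_bd_index_def bd_term_def db_term_def face_dgn_Suc psign_Suc add.commute)
  next
    case False
    then show ?thesis
      using t by (simp add: db_to_bd_index_def bd_term_def db_term_def face_Suc_dgn_less psign_Suc
        add.commute)
  qed
qed

lemma bd_eq_decomposition:
  "bd A Mo Mf n = padd A (idm A (Mo n)) (padd A (bd_term n (0, Suc n))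
     (hsum (Mo n) (Mo n) (\<lambda>t. bd_term n (db_to_bd_index t)) ({..n} \<times> {..n} - {(n, 0)})))"
proof -
  let ?x = "bd_term n" and ?h = "hsum (Mo n) (Mo n) (bd_term n)"
  define T where "T = {..n} \<times> {..n} - {(n, 0)}"
  define D where "D = (\<lambda>j. (Suc j, j)) ` {..n} \<union> (\<lambda>j. (j, j)) ` {..n}"
  have T: "finite T" "(Suc n, Suc n) \<notin> db_to_bd_index ` T" "(0, Suc n) \<notin> db_to_bd_index ` T"
    unfolding T_def db_to_bd_index_image by auto
  have decomp:
    "{..Suc n} \<times> {..Suc n} = D \<union> insert (Suc n, Suc n) (insert (0, Suc n) (db_to_bd_index ` T))"
    unfolding D_def T_def db_to_bd_index_image by force
  have disj: "D \<inter> insert (Suc n, Suc n) (insert (0, Suc n) (db_to_bd_index ` T)) = {}"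
    unfolding D_def T_def db_to_bd_index_image by auto
  have "bd A Mo Mf n =
      padd A (?h D) (?h (insert (Suc n, Suc n) (insert (0, Suc n) (db_to_bd_index ` T))))"
    unfolding bd_eq_hsum decomp using T disj by (intro hsum_Un_disjoint) (auto simp: D_def)
  also have "?h D = pzero A (Mo n) (Mo n)"
    unfolding D_def
    by (rule hsum_pairs_cancel)
      (auto simp: inj_on_def bd_term_def face_Suc_dgn face_dgn_same psign_Suc)
  also have "?h (insert (Suc n, Suc n) (insert (0, Suc n) (db_to_bd_index ` T))) =
      padd A (?x (Suc n, Suc n)) (padd A (?x (0, Suc n)) (?h (db_to_bd_index ` T)))"
    using T by (simp add: hsum_insert)
  also have "?x (Suc n, Suc n) = idm A (Mo n)"
    by (simp add: bd_term_def face_dgn_same psign_def)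
  also have "?h (db_to_bd_index ` T) = hsum (Mo n) (Mo n) (\<lambda>t. ?x (db_to_bd_index t)) T"
    by (rule hsum_reindex) (auto intro: inj_on_subset[OF inj_db_to_bd_index])
  finally show ?thesis
    unfolding T_def by simp
qed

lemma pneg_kappa_0: "pneg A (kappa A Mo Mf 0) = bd_term 0 (0, 1)"
  using cmp_hom[OF dgn_hom[of 0 1] face_hom[of 0 0]]
  by (simp add: kappa_def bd_term_def psub_def psign_def)

lemma pneg_kappa_Suc:
  "pneg A (kappa A Mo Mf (Suc m)) =
    padd A (bd_term (Suc m) (0, Suc (Suc m))) (db_term m (Suc m, 0))"
proof -
  let ?X = "cmp A (face Mf (Suc (Suc m)) 0) (dgn Mf (Suc m) (Suc (Suc m)))"
  let ?Y = "cmp A (dgn Mf m (Suc m)) (face Mf (Suc m) 0)"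
  have X: "?X \<in> Hom (Mo (Suc m)) (Mo (Suc m))" and Y: "?Y \<in> Hom (Mo (Suc m)) (Mo (Suc m))"
    by (rule cmp_hom[OF dgn_hom face_hom] cmp_hom[OF face_hom dgn_hom])+
  then show ?thesis
    using pneg_padd[OF X pneg_hom[OF Y]] pneg_padd[OF pneg_hom[OF X] Y]
    by (simp add: kappa_def bd_term_def db_term_def psub_def psign_def)
qed

lemma bd_plus_db: "padd A (bd A Mo Mf n) (db A Mo Mf n) = psub A (idm A (Mo n)) (kappa A Mo Mf n)"
proof (cases n)
  case 0
  have "{..0} \<times> {..0} - {(0, 0)} = ({} :: (nat \<times> nat) set)" by auto
  then show ?thesis
    unfolding 0 bd_eq_decomposition using bd_term_hom[of 0]
    by (simp add: db_def psub_def pneg_kappa_0)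
next
  case (Suc m)
  let ?a = "Mo (Suc m)" and ?T = "{..Suc m} \<times> {..Suc m} - {(Suc m, 0)}"
  interpret G: comm_group "hom_group ?a ?a" by (rule comm_group_hom_group)
  have "hsum ?a ?a (db_term m) (insert (Suc m, 0) ?T) =
      padd A (db_term m (Suc m, 0)) (hsum ?a ?a (db_term m) ?T)"
    by (rule hsum_insert) auto
  moreover have "insert (Suc m, 0) ?T = {..Suc m} \<times> {..Suc m}" by auto
  ultimately have db:
    "db A Mo Mf (Suc m) = padd A (db_term m (Suc m, 0)) (hsum ?a ?a (db_term m) ?T)"
    by (simp only: db_Suc_eq_hsum)
  let ?S = "hsum ?a ?a (\<lambda>t. bd_term (Suc m) (db_to_bd_index t)) ?T"
    and ?S' = "hsum ?a ?a (db_term m) ?T"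
  have "padd A ?S ?S' =
      hsum ?a ?a (\<lambda>t. padd A (bd_term (Suc m) (db_to_bd_index t)) (db_term m t)) ?T"
    by (simp add: hsum_padd)
  also have "\<dots> = pzero A ?a ?a"
    using G.l_inv by (intro hsum_eq_pzero) (simp add: bd_term_db_to_bd_index)
  finally have cancel: "padd A ?S ?S' = pzero A ?a ?a" .
  have "padd A (bd A Mo Mf (Suc m)) (db A Mo Mf (Suc m)) =
      padd A (padd A (idm A ?a) (padd A (bd_term (Suc m) (0, Suc (Suc m))) (db_term m (Suc m, 0))))
        (padd A ?S ?S')"
    unfolding bd_eq_decomposition db by (simp add: G.m_ac[simplified])
  then show ?thesis
    unfolding Suc cancel by (simp add: psub_def pneg_kappa_Suc)
qed

lemma kappa_hom: "kappa A Mo Mf n \<in> Hom (Mo n) (Mo n)"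
  using cmp_hom[OF dgn_hom[of n "Suc n"] face_hom[of n 0]]
    cmp_hom[OF face_hom[of "n - 1" 0] dgn_hom[of "n - 1" n]]
  by (cases n) (simp_all add: kappa_def psub_def)

theorem one_minus_bd_comp_one_minus_db:
  "cmp A (psub A (idm A (Mo n)) (bd A Mo Mf n)) (psub A (idm A (Mo n)) (db A Mo Mf n)) =
    kappa A Mo Mf n"
proof -
  have "cmp A (psub A (idm A (Mo n)) (bd A Mo Mf n)) (psub A (idm A (Mo n)) (db A Mo Mf n)) =
      psub A (idm A (Mo n)) (padd A (bd A Mo Mf n) (db A Mo Mf n))"
    by (rule cmp_one_minus_one_minus) (simp_all add: bd_comp_db)
  then show ?thesis
    by (simp add: bd_plus_db psub_psub_cancel[OF idm_hom kappa_hom])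
qed

theorem one_minus_db_comp_one_minus_bd:
  "cmp A (psub A (idm A (Mo n)) (db A Mo Mf n)) (psub A (idm A (Mo n)) (bd A Mo Mf n)) =
    kappa A Mo Mf n"
proof -
  have "cmp A (psub A (idm A (Mo n)) (db A Mo Mf n)) (psub A (idm A (Mo n)) (bd A Mo Mf n)) =
      psub A (idm A (Mo n)) (padd A (db A Mo Mf n) (bd A Mo Mf n))"
    by (rule cmp_one_minus_one_minus) (simp_all add: db_comp_bd)
  then show ?thesis
    by (simp add: padd_commute[OF db_hom bd_hom] bd_plus_db psub_psub_cancel[OF idm_hom kappa_hom])
qed

end

theorem mainTheorem10:
  fixes A :: "('o, 'm, 'x) preadd_cat_scheme"
    and Mo :: "nat \<Rightarrow> 'o" and Mf :: "nat \<Rightarrow> nat \<Rightarrow> (int \<Rightarrow> int) \<Rightarrow> 'm"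
  assumes "duplicial A Mo Mf"
  shows "kappa A Mo Mf n =
           cmp A (psub A (idm A (Mo n)) (bd A Mo Mf n)) (psub A (idm A (Mo n)) (db A Mo Mf n))
       \<and> kappa A Mo Mf n =
           cmp A (psub A (idm A (Mo n)) (db A Mo Mf n)) (psub A (idm A (Mo n)) (bd A Mo Mf n))"
proof -
  interpret duplicial_module A Mo Mf by (rule duplicial_module.intro) (fact assms)
  show ?thesis
    using one_minus_bd_comp_one_minus_db one_minus_db_comp_one_minus_bd by simp
qed

end
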